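(* Under the hypotheses of Lemma 7 (with $T=\bigcup_{j\in J}T_j$ a finite or countable disjoint union of second-countable Hausdorff manifolds, $f:T\to\mathbb{R}^l$ continuously differentiable, and $f_n:T\to\mathbb{R}^l$ continuously differentiable injective functions converging to $f$ uniformly on compact sets), every non-invertible value $u$ of $f$ is a critical value of $f$: there exists $t\in T$ with $f(t)=u$ such that the derivative $f'(t)$ has rank less than $l$.
   Context: $u\in\mathbb{R}^l$ is a non-invertible value of $f$ if there exist $t_1\neq t_2$ in $T$ with $f(t_1)=f(t_2)=u$. The rank of $f'(t)$ is the rank of the differential of $f$ at $t$ as a linear map from the tangent space of the relevant manifold $T_j$ into $\mathbb{R}^l$. *)

theory Defs
  imports "HOL-Analysis.Analysis"
begin

text \<open>A manifold of dimension d is modelled on an open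
subset of a d-dimensional linear subspace S of a Euclidean space 'e
(S is a copy of R^d).\<close>

definition is_chart :: "'e::euclidean_space set \<Rightarrow> 'a::topological_space set \<Rightarrow> ('a \<Rightarrow> 'e) \<Rightarrow> bool" where
  "is_chart S U \<phi> \<longleftrightarrow> open U \<and> \<phi> ` U \<subseteq> S \<and> openin (top_of_set S) (\<phi> ` U)
     \<and> inj_on \<phi> U \<and> continuous_on U \<phi> \<and> continuous_on (\<phi> ` U) (inv_into U \<phi>)"

definition C1_on :: "'e::euclidean_space set \<Rightarrow> ('e \<Rightarrow> 'b::real_normed_vector) \<Rightarrow> bool" where
  "C1_on V g \<longleftrightarrow> (\<exists>D :: 'e \<Rightarrow> ('e \<Rightarrow>\<^sub>L 'b). continuous_on V D \<and>
      (\<forall>x\<in>V. (g has_derivative blinfun_apply (D x)) (at x within V)))"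

definition C1_manifold :: "'a::topological_space set \<Rightarrow> 'e::euclidean_space set \<Rightarrow> ('a set \<times> ('a \<Rightarrow> 'e)) set \<Rightarrow> bool" where
  "C1_manifold M S A \<longleftrightarrow> subspace S \<and>
     (\<forall>(U,\<phi>)\<in>A. is_chart S U \<phi> \<and> U \<subseteq> M) \<and>
     (\<forall>t\<in>M. \<exists>(U,\<phi>)\<in>A. t \<in> U) \<and>
     (\<forall>(U,\<phi>)\<in>A. \<forall>(V,\<psi>)\<in>A. C1_on (\<phi> ` (U \<inter> V)) (\<psi> \<circ> inv_into U \<phi>))"

definition C1_map :: "('a::topological_space set \<times> ('a \<Rightarrow> 'e::euclidean_space)) set \<Rightarrow> ('a \<Rightarrow> 'b::real_normed_vector) \<Rightarrow> bool" where
  "C1_map A f \<longleftrightarrow> (\<forall>(U,\<phi>)\<in>A. C1_on (\<phi> ` U) (f \<circ> inv_into U \<phi>))"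

definition rank_lt :: "'e::euclidean_space set \<Rightarrow> ('a::topological_space set \<times> ('a \<Rightarrow> 'e)) set \<Rightarrow> ('a \<Rightarrow> 'b::euclidean_space) \<Rightarrow> 'a \<Rightarrow> nat \<Rightarrow> bool" where
  "rank_lt S A f t l \<longleftrightarrow> (\<exists>(U,\<phi>)\<in>A. t \<in> U \<and> (\<exists>D.
      ((f \<circ> inv_into U \<phi>) has_derivative D) (at (\<phi> t) within \<phi> ` U) \<and> dim (D ` S) < l))"

end

theory Submission
  imports Defs
begin

text \<open>Near a point t where f'(t) has full rank, the value f(t) is stable: in a chart,
compose f with an affine right inverse of f'(t) restricted to a small ball; the result
is within 1/2 (in operator norm) of the identity, so by Brouwer's fixed point theorem
every map uniformly close to f on a small compact neighbourhood of t still takes the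
value f(t) there. If u = f(t1) = f(t2) with t1 \<noteq> t2 and f'(t1), f'(t2) of full rank,
then for large n the injective map f_n takes the value u both near t1 and near t2.\<close>

lemma linear_right_inverse_on_subspace:
  fixes L :: "'e::euclidean_space \<Rightarrow> 'b::euclidean_space"
  assumes S: "subspace S" and L: "linear L" and full: "DIM('b) \<le> dim (L ` S)"
  obtains R where "linear R" "\<And>y. R y \<in> S" "\<And>y. L (R y) = y"
proof -
  have "dim (L ` S) = DIM('b)" using full dim_subset_UNIV[of "L ` S"] by simp
  then have "span (L ` S) = UNIV" by (simp add: dim_eq_full)
  moreover have "span (L ` S) = L ` S"
    using linear_subspace_image[OF L S] by (rule span_eq_iff[THEN iffD2])
  ultimately have "L ` S = UNIV" by simp
  then have "\<forall>b. \<exists>x\<in>S. L x = b" by (metis UNIV_I imageE)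
  then obtain s where s: "\<And>b. s b \<in> S" "\<And>b. L (s b) = b" by metis
  define R where "R y = (\<Sum>b\<in>Basis. (y \<bullet> b) *\<^sub>R s b)" for y
  have "linear R" unfolding R_def
    by (rule linearI) (auto simp: inner_add_left sum.distrib scaleR_add_left scaleR_sum_right)
  moreover have "R y \<in> S" for y
    unfolding R_def using S s(1) by (intro subspace_sum subspace_scale) auto
  moreover have "L (R y) = y" for y
    unfolding R_def using L s(2) by (simp add: linear_sum linear_scale euclidean_representation)
  ultimately show thesis by (rule that)
qed

text \<open>The map y \<mapsto> y - h y is 1/2-Lipschitz, so y \<mapsto> y - (g y - h 0) maps the ball into itself.\<close>

lemma perturbed_near_identity_attains_center_value:
  fixes h g :: "'b::euclidean_space \<Rightarrow> 'b"
  assumes r: "r > 0"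
    and h_deriv: "\<And>y. y \<in> cball 0 r \<Longrightarrow> (h has_derivative h' y) (at y within cball 0 r)"
    and h_near_id: "\<And>y. y \<in> cball 0 r \<Longrightarrow> onorm (\<lambda>v. v - h' y v) \<le> 1/2"
    and g_cont: "continuous_on (cball 0 r) g"
    and g_close: "\<And>y. y \<in> cball 0 r \<Longrightarrow> norm (g y - h y) \<le> r/2"
  shows "h 0 \<in> g ` cball 0 r"
proof -
  have lipschitz: "norm ((y - h y) - (0 - h 0)) \<le> 1/2 * norm (y - 0)" if "y \<in> cball 0 r" for y
  proof (rule differentiable_bound[where f = "\<lambda>y. y - h y" and f' = "\<lambda>y v. v - h' y v"])
    show "((\<lambda>y. y - h y) has_derivative (\<lambda>v. v - h' y v)) (at y within cball 0 r)"
      if "y \<in> cball 0 r" for y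
      using h_deriv[OF that] by (auto intro!: derivative_eq_intros)
  qed (use that r h_near_id in auto)
  define F where "F y = y - (g y - h 0)" for y
  have "\<exists>y\<in>cball 0 r. F y = y"
  proof (rule brouwer_ball[OF r])
    show "continuous_on (cball 0 r) F" unfolding F_def using g_cont by (intro continuous_intros)
    show "F \<in> cball 0 r \<rightarrow> cball 0 r"
    proof
      fix y :: 'b assume y: "y \<in> cball 0 r"
      have "F y = ((y - h y) - (0 - h 0)) - (g y - h y)" by (simp add: F_def)
      then have "norm (F y) \<le> norm ((y - h y) - (0 - h 0)) + norm (g y - h y)"
        by (metis norm_triangle_ineq4)
      also have "\<dots> \<le> r" using lipschitz[OF y] g_close[OF y] y by simp
      finally show "F y \<in> cball 0 r" by simp
    qed
  qed blast
  then show ?thesis by (auto simp: F_def)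
qed

lemma C1_full_rank_near_identity_parametrization:
  fixes G :: "'e::euclidean_space \<Rightarrow> 'b::euclidean_space" and D :: "'e \<Rightarrow> 'e \<Rightarrow>\<^sub>L 'b"
  assumes S: "subspace S" and V: "openin (top_of_set S) V" and p: "p \<in> V"
    and D_cont: "continuous_on V D"
    and G_deriv: "\<And>x. x \<in> V \<Longrightarrow> (G has_derivative D x) (at x within V)"
    and full: "DIM('b) \<le> dim (D p ` S)"
  obtains r a h' where "r > 0" "continuous_on (cball 0 r) a" "a ` cball 0 r \<subseteq> V" "a 0 = p"
    "\<And>y. y \<in> cball 0 r \<Longrightarrow> ((G \<circ> a) has_derivative h' y) (at y within cball 0 r)"
    "\<And>y. y \<in> cball 0 r \<Longrightarrow> onorm (\<lambda>v. v - h' y v) \<le> 1/2"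
proof -
  obtain R where R: "linear R" "\<And>y. R y \<in> S" "\<And>y. D p (R y) = y"
    using linear_right_inverse_on_subspace[OF S _ full] blinfun.bounded_linear_right
    by (metis bounded_linear.linear)
  have R_bl: "bounded_linear R" using R(1) by (simp add: linear_conv_bounded_linear)
  define B where "B = onorm R"
  have B: "B \<ge> 0" "\<And>y. norm (R y) \<le> B * norm y"
    unfolding B_def using R_bl by (auto intro: onorm_pos_le onorm)
  obtain e1 where e1: "e1 > 0" "ball p e1 \<inter> S \<subseteq> V"
    using V p unfolding openin_contains_ball by blast
  obtain e2 where e2: "e2 > 0" "\<And>x. x \<in> V \<Longrightarrow> dist x p < e2 \<Longrightarrow> dist (D x) (D p) < 1 / (2 * (B + 1))"
    using D_cont p B(1) unfolding continuous_on_iff by (metis divide_pos_pos zero_less_numeral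
      add_nonneg_pos zero_less_one mult_pos_pos)
  define r where "r = min e1 e2 / (2 * (B + 1))"
  define a where "a y = p + R y" for y
  have r: "r > 0" using e1 e2 B by (simp add: r_def)
  have a_near: "dist (a y) p < min e1 e2" if "y \<in> cball 0 r" for y
  proof -
    have "dist (a y) p \<le> B * r" using B that by (auto simp: a_def dist_norm intro: order_trans mult_left_mono)
    also have "\<dots> = min e1 e2 * (B / (2 * (B + 1)))" by (simp add: r_def)
    also have "\<dots> < min e1 e2 * 1"
      using e1(1) e2(1) B(1) by (intro mult_strict_left_mono) simp_all
    finally show ?thesis by simp
  qed
  have "p \<in> S" using V p by (meson in_mono openin_imp_subset)
  then have a_S: "a y \<in> S" for y using S R(2) by (simp add: a_def subspace_add)
  have a_V: "a y \<in> V" if "y \<in> cball 0 r" for y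
    using e1(2) a_S[of y] a_near[OF that] by (auto simp: dist_commute)
  have Ga_deriv: "((G \<circ> a) has_derivative D (a y) \<circ> R) (at y within cball 0 r)" if "y \<in> cball 0 r" for y
  proof (rule diff_chain_within)
    show "(a has_derivative R) (at y within cball 0 r)" unfolding a_def
      using R_bl by (auto intro!: derivative_eq_intros bounded_linear_imp_has_derivative)
    show "(G has_derivative D (a y)) (at (a y) within a ` cball 0 r)"
      by (rule has_derivative_subset[OF G_deriv[OF a_V[OF that]]]) (use a_V in blast)
  qed
  have Ga_near_id: "onorm (\<lambda>v. v - (D (a y) \<circ> R) v) \<le> 1/2" if "y \<in> cball 0 r" for y
  proof -
    have "(\<lambda>v. v - (D (a y) \<circ> R) v) = blinfun_apply (D p - D (a y)) \<circ> R"
      using R(3) by (auto simp: blinfun.diff_left)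
    then have "onorm (\<lambda>v. v - (D (a y) \<circ> R) v) \<le> norm (D p - D (a y)) * B"
      using onorm_compose[OF blinfun.bounded_linear_right R_bl]
      by (simp add: B_def norm_blinfun.rep_eq)
    also have "\<dots> \<le> 1 / (2 * (B + 1)) * B"
      using e2(2)[OF a_V[OF that]] a_near[OF that] B(1)
      by (intro mult_right_mono) (auto simp: dist_norm norm_minus_commute)
    also have "\<dots> \<le> 1/2" using B(1) by (simp add: field_simps)
    finally show ?thesis .
  qed
  have "continuous_on (cball 0 r) a"
    unfolding a_def using R_bl by (intro continuous_intros linear_continuous_on)
  moreover have "a ` cball 0 r \<subseteq> V" using a_V by blast
  moreover have "a 0 = p" using R(1) by (simp add: a_def linear_0)
  ultimately show thesis by (rule that[OF r _ _ _ Ga_deriv Ga_near_id])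
qed

lemma C1_full_rank_value_stable:
  fixes G :: "'e::euclidean_space \<Rightarrow> 'b::euclidean_space" and D :: "'e \<Rightarrow> 'e \<Rightarrow>\<^sub>L 'b"
  assumes "subspace S" "openin (top_of_set S) V" "p \<in> V" "continuous_on V D"
    "\<And>x. x \<in> V \<Longrightarrow> (G has_derivative D x) (at x within V)"
    "DIM('b) \<le> dim (D p ` S)"
  obtains K \<delta> where "compact K" "K \<subseteq> V" "\<delta> > 0"
    "\<And>g. continuous_on K g \<Longrightarrow> (\<And>x. x \<in> K \<Longrightarrow> dist (g x) (G x) < \<delta>) \<Longrightarrow> G p \<in> g ` K"
proof -
  obtain r a h' where r: "r > 0" and a_cont: "continuous_on (cball 0 r) a"
    and a_V: "a ` cball 0 r \<subseteq> V" and a0: "a 0 = p"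
    and Ga_deriv: "\<And>y. y \<in> cball 0 r \<Longrightarrow> ((G \<circ> a) has_derivative h' y) (at y within cball 0 r)"
    and Ga_near_id: "\<And>y. y \<in> cball 0 r \<Longrightarrow> onorm (\<lambda>v. v - h' y v) \<le> 1/2"
    using C1_full_rank_near_identity_parametrization[OF assms] by blast
  define K where "K = a ` cball 0 r"
  have "compact K" unfolding K_def using a_cont by (rule compact_continuous_image) simp
  moreover have "G p \<in> g ` K"
    if g_cont: "continuous_on K g" and g_close: "\<And>x. x \<in> K \<Longrightarrow> dist (g x) (G x) < r/2" for g
  proof -
    have "(G \<circ> a) 0 \<in> (g \<circ> a) ` cball 0 r"
    proof (rule perturbed_near_identity_attains_center_value[OF r Ga_deriv Ga_near_id])
      show "continuous_on (cball 0 r) (g \<circ> a)"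
        using continuous_on_compose[OF a_cont] g_cont by (simp add: K_def)
      show "norm ((g \<circ> a) y - (G \<circ> a) y) \<le> r/2" if "y \<in> cball 0 r" for y
        using g_close[of "a y"] that by (simp add: K_def dist_norm)
    qed
    then show ?thesis using a0 by (auto simp: K_def)
  qed
  moreover have "K \<subseteq> V" using a_V by (simp add: K_def)
  ultimately show thesis using r by (intro that[of K "r/2"]) simp_all
qed

lemma C1_on_imp_continuous_on:
  assumes "C1_on V g" shows "continuous_on V g"
  using assms has_derivative_continuous
  unfolding C1_on_def continuous_on_eq_continuous_within by blast

lemma C1_map_imp_continuous_on_chart:
  assumes g: "C1_map A g" and chart: "(U, \<phi>) \<in> A" "is_chart S U \<phi>"
  shows "continuous_on U g"
proof -
  have "continuous_on U \<phi>" and "inj_on \<phi> U" using chart(2) unfolding is_chart_def by blast+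
  moreover have "continuous_on (\<phi> ` U) (g \<circ> inv_into U \<phi>)"
    using g chart(1) C1_on_imp_continuous_on unfolding C1_map_def by blast
  ultimately have "continuous_on U (g \<circ> inv_into U \<phi> \<circ> \<phi>)"
    by (blast intro: continuous_on_compose)
  moreover note \<open>inj_on \<phi> U\<close>
  then have "continuous_on U (g \<circ> inv_into U \<phi> \<circ> \<phi>) \<longleftrightarrow> continuous_on U g"
    by (intro continuous_on_cong) simp_all
  ultimately show ?thesis by blast
qed

lemma not_rank_lt_value_stable:
  fixes f :: "'a::topological_space \<Rightarrow> 'b::euclidean_space" and S :: "'e::euclidean_space set"
  assumes M: "C1_manifold M S A" and f: "C1_map A f" and t: "t \<in> M"
    and full: "\<not> rank_lt S A f t DIM('b)" and W: "open W" "t \<in> W"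
  obtains K \<delta> where "compact K" "K \<subseteq> W" "\<delta> > 0"
    "\<And>g. C1_map A g \<Longrightarrow> (\<And>x. x \<in> K \<Longrightarrow> dist (g x) (f x) < \<delta>) \<Longrightarrow> f t \<in> g ` K"
proof -
  obtain U \<phi> where chart: "(U, \<phi>) \<in> A" "t \<in> U" using M t unfolding C1_manifold_def by blast
  have S: "subspace S" and ch: "is_chart S U \<phi>" using M chart(1) unfolding C1_manifold_def by auto
  define \<psi> where "\<psi> = inv_into U \<phi>"
  have \<psi>_cont: "continuous_on (\<phi> ` U) \<psi>" and \<psi>_U: "\<And>x. x \<in> \<phi> ` U \<Longrightarrow> \<psi> x \<in> U"
    and \<psi>_t: "\<psi> (\<phi> t) = t"
    using ch chart(2) unfolding is_chart_def \<psi>_def by (auto intro: inv_into_into)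
  obtain D :: "'e \<Rightarrow> 'e \<Rightarrow>\<^sub>L 'b" where D_cont: "continuous_on (\<phi> ` U) D"
    and D_deriv: "\<And>x. x \<in> \<phi> ` U \<Longrightarrow> ((f \<circ> \<psi>) has_derivative D x) (at x within \<phi> ` U)"
    using f chart(1) unfolding C1_map_def C1_on_def \<psi>_def by blast
  have D_full: "DIM('b) \<le> dim (D (\<phi> t) ` S)"
    using full chart D_deriv[of "\<phi> t"] unfolding rank_lt_def \<psi>_def by fastforce
  define V where "V = \<phi> ` U \<inter> \<psi> -` W"
  have "openin (top_of_set (\<phi> ` U)) V"
    unfolding V_def using \<psi>_cont W(1) by (rule continuous_openin_preimage_gen)
  then have V: "openin (top_of_set S) V"
    using ch unfolding is_chart_def by (blast intro: openin_trans)
  have t_V: "\<phi> t \<in> V" using chart(2) \<psi>_t W(2) by (simp add: V_def)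
  have D_cont_V: "continuous_on V D" using D_cont by (rule continuous_on_subset) (simp add: V_def)
  have D_deriv_V: "((f \<circ> \<psi>) has_derivative D x) (at x within V)" if "x \<in> V" for x
    using D_deriv that by (auto simp: V_def intro: has_derivative_subset)
  obtain K0 \<delta> where K0: "compact K0" "K0 \<subseteq> V" "\<delta> > 0"
    and hits: "\<And>g. continuous_on K0 g \<Longrightarrow> (\<And>x. x \<in> K0 \<Longrightarrow> dist (g x) ((f \<circ> \<psi>) x) < \<delta>)
      \<Longrightarrow> (f \<circ> \<psi>) (\<phi> t) \<in> g ` K0"
    using C1_full_rank_value_stable[OF S V t_V D_cont_V D_deriv_V D_full] by blast
  have \<psi>_K0: "continuous_on K0 \<psi>" "\<psi> ` K0 \<subseteq> U \<inter> W"
    using K0(2) \<psi>_cont \<psi>_U by (auto simp: V_def intro: continuous_on_subset)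
  have "f t \<in> g ` \<psi> ` K0"
    if g: "C1_map A g" and close: "\<And>x. x \<in> \<psi> ` K0 \<Longrightarrow> dist (g x) (f x) < \<delta>" for g
  proof -
    have "continuous_on U g" using g chart(1) ch by (rule C1_map_imp_continuous_on_chart)
    then have "continuous_on K0 (g \<circ> \<psi>)"
      using \<psi>_K0 by (intro continuous_on_compose) (auto intro: continuous_on_subset)
    then have "(f \<circ> \<psi>) (\<phi> t) \<in> (g \<circ> \<psi>) ` K0" using close by (intro hits) auto
    then show ?thesis using \<psi>_t by auto
  qed
  moreover have "compact (\<psi> ` K0)" using \<psi>_K0(1) K0(1) by (rule compact_continuous_image)
  ultimately show thesis using \<psi>_K0(2) K0(3) by (intro that[of "\<psi> ` K0" \<delta>]) auto
qed

theorem mainTheorem13: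
  fixes J :: "'j set"
    and T :: "'j \<Rightarrow> 'a::{t2_space, second_countable_topology} set"
    and S :: "'j \<Rightarrow> 'e::euclidean_space set"
    and A :: "'j \<Rightarrow> ('a set \<times> ('a \<Rightarrow> 'e)) set"
    and f :: "'a \<Rightarrow> real ^ 'l"
    and fn :: "nat \<Rightarrow> 'a \<Rightarrow> real ^ 'l"
    and u :: "real ^ 'l"
  assumes J_countable: "countable J"
    and T_open: "\<And>j. j \<in> J \<Longrightarrow> open (T j)"
    and T_disjoint: "\<And>i j. i \<in> J \<Longrightarrow> j \<in> J \<Longrightarrow> i \<noteq> j \<Longrightarrow> T i \<inter> T j = {}"
    and T_cover: "(\<Union>j\<in>J. T j) = UNIV"
    and T_manifold: "\<And>j. j \<in> J \<Longrightarrow> C1_manifold (T j) (S j) (A j)"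
    and f_C1: "\<And>j. j \<in> J \<Longrightarrow> C1_map (A j) f"
    and fn_C1: "\<And>n j. j \<in> J \<Longrightarrow> C1_map (A j) (fn n)"
    and fn_inj: "\<And>n. inj (fn n)"
    and fn_conv: "\<And>K. compact K \<Longrightarrow> uniform_limit K fn f sequentially"
    and u_noninv: "\<exists>t1 t2. t1 \<noteq> t2 \<and> f t1 = u \<and> f t2 = u"
  shows "\<exists>t. f t = u \<and> (\<exists>j\<in>J. t \<in> T j \<and> rank_lt (S j) (A j) f t CARD('l))"
proof (rule ccontr)
  assume no_critical_preimage: "\<not> ?thesis"
  have eventually_hits: "\<forall>\<^sub>F n in sequentially. u \<in> fn n ` W"
    if t_u: "f t = u" and W_t: "open W" "t \<in> W" for t W
  proof -
    obtain j where j: "j \<in> J" "t \<in> T j" using T_cover by blast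
    then have full_rank: "\<not> rank_lt (S j) (A j) f t DIM(real ^ 'l)"
      using no_critical_preimage t_u by auto
    obtain K \<delta> where K: "compact K" "K \<subseteq> W" "\<delta> > 0"
      and hits: "\<And>g. C1_map (A j) g \<Longrightarrow> (\<And>x. x \<in> K \<Longrightarrow> dist (g x) (f x) < \<delta>) \<Longrightarrow> f t \<in> g ` K"
      using not_rank_lt_value_stable[OF T_manifold[OF j(1)] f_C1[OF j(1)] j(2) full_rank W_t]
      by blast
    have "\<forall>\<^sub>F n in sequentially. \<forall>x\<in>K. dist (fn n x) (f x) < \<delta>"
      using uniform_limitD[OF fn_conv[OF K(1)] K(3)] .
    then show ?thesis
      by eventually_elim (use hits fn_C1[OF j(1)] K(2) t_u in blast)
  qed
  obtain t1 t2 where t12: "t1 \<noteq> t2" "f t1 = u" "f t2 = u" using u_noninv by blast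
  obtain W1 W2 where W: "open W1" "open W2" "t1 \<in> W1" "t2 \<in> W2" "W1 \<inter> W2 = {}"
    using hausdorff[OF t12(1)] by blast
  have "\<forall>\<^sub>F n in sequentially. u \<in> fn n ` W1 \<and> u \<in> fn n ` W2"
    using eventually_hits[OF t12(2) W(1,3)] eventually_hits[OF t12(3) W(2,4)] by (rule eventually_conj)
  then obtain n where "u \<in> fn n ` W1" "u \<in> fn n ` W2"
    using eventually_happens'[OF sequentially_bot] by blast
  then obtain x1 x2 where "x1 \<in> W1" "x2 \<in> W2" "fn n x1 = fn n x2" by (metis imageE)
  then show False using fn_inj[of n] W(5) by (auto dest: injD)
qed

end
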